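(* Let $\mathcal J$ be an instance of the uniform a priori TRP on vertex set $\bigcup_{v\in X}S_v$ (with root $r$), where for each $v\in X$ the vertices of $S_v$ are co-located (pairwise distance $0$ and identical distances to all other vertices), and every vertex is independently active with probability $p$; let $\Pi$ denote this distribution of the active set. Let $\tau$ be a master tour, fix $z\in X$, and let $C_z^1,\dots,C_z^k$ be the minimal partition of $S_z$ such that the vertices of each $C_z^\ell$ appear consecutively in $\tau$. For two distinct parts $C_z^i$ and $C_z^j$, let $\tau_i$ be the tour obtained from $\tau$ by relocating the vertices of $C_z^j$ to immediately after $C_z^i$, and $\tau_j$ the tour obtained from $\tau$ by relocating the vertices of $C_z^i$ to immediately before $C_z^j$. Then $$\mathbb{E}_{A\sim\Pi}[\mathsf{LAT}^A_\tau]\ge\min\big(\mathbb{E}_{A\sim\Pi}[\mathsf{LAT}^A_{\tau_i}],\ \mathbb{E}_{A\sim\Pi}[\mathsf{LAT}^A_{\tau_j}]\big).$$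
   Context: A master tour is a tour from the root $r$ visiting all vertices. For an active set $A$, the master tour $\pi$ is shortcut to visit only $A$ in the same order starting from $r$; $\mathsf{LAT}^A_\pi(w)$ is the distance from $r$ to $w\in A$ along this shortcut tour, and $\mathsf{LAT}^A_\pi=\sum_{w\in A}\mathsf{LAT}^A_\pi(w)$. *)

theory Defs
  imports Main "HOL-Library.FuncSet" Complex_Main
begin

fun path_len :: "('a \<Rightarrow> 'a \<Rightarrow> real) \<Rightarrow> 'a list \<Rightarrow> real" where
  "path_len d (x # y # ys) = d x y + path_len d (y # ys)"
| "path_len d _ = 0"

definition shortcut :: "'a list \<Rightarrow> 'a set \<Rightarrow> 'a list" where
  "shortcut \<pi> A = filter (\<lambda>x. x \<in> A) \<pi>"

definition lat_vertex :: "('a \<Rightarrow> 'a \<Rightarrow> real) \<Rightarrow> 'a \<Rightarrow> 'a list \<Rightarrow> 'a set \<Rightarrow> 'a \<Rightarrow> real" where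
  "lat_vertex d r \<pi> A w = path_len d (r # takeWhile (\<lambda>x. x \<noteq> w) (shortcut \<pi> A) @ [w])"

definition LAT :: "('a \<Rightarrow> 'a \<Rightarrow> real) \<Rightarrow> 'a \<Rightarrow> 'a list \<Rightarrow> 'a set \<Rightarrow> real" where
  "LAT d r \<pi> A = (\<Sum>w\<in>A. lat_vertex d r \<pi> A w)"

definition exp_LAT :: "('a \<Rightarrow> 'a \<Rightarrow> real) \<Rightarrow> 'a \<Rightarrow> 'a list \<Rightarrow> 'a set \<Rightarrow> real \<Rightarrow> real" where
  "exp_LAT d r \<pi> V p =
     (\<Sum>A\<in>Pow V. p ^ card A * (1 - p) ^ (card V - card A) * LAT d r \<pi> A)"

text \<open>C is one of the parts of the minimal partition of S into sets of
  vertices appearing consecutively in tau, i.e. a maximal run of S-vertices.\<close>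
definition is_part :: "'a list \<Rightarrow> 'a set \<Rightarrow> 'a set \<Rightarrow> bool" where
  "is_part \<tau> S C \<longleftrightarrow> (\<exists>a b. a < b \<and> b \<le> length \<tau> \<and>
      C = set (take (b - a) (drop a \<tau>)) \<and>
      (\<forall>k\<in>{a..<b}. \<tau> ! k \<in> S) \<and>
      (a = 0 \<or> \<tau> ! (a - 1) \<notin> S) \<and>
      (b = length \<tau> \<or> \<tau> ! b \<notin> S))"

definition last_in :: "'a list \<Rightarrow> 'a set \<Rightarrow> 'a" where
  "last_in \<tau> C = \<tau> ! Max {k. k < length \<tau> \<and> \<tau> ! k \<in> C}"

definition first_in :: "'a list \<Rightarrow> 'a set \<Rightarrow> 'a" where
  "first_in \<tau> C = \<tau> ! Min {k. k < length \<tau> \<and> \<tau> ! k \<in> C}"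

definition move_after :: "'a list \<Rightarrow> 'a set \<Rightarrow> 'a set \<Rightarrow> 'a list" where
  "move_after \<tau> C D = concat (map (\<lambda>x. if x \<in> D then []
       else if x = last_in \<tau> C then x # filter (\<lambda>y. y \<in> D) \<tau> else [x]) \<tau>)"

definition move_before :: "'a list \<Rightarrow> 'a set \<Rightarrow> 'a set \<Rightarrow> 'a list" where
  "move_before \<tau> C D = concat (map (\<lambda>x. if x \<in> C then []
       else if x = first_in \<tau> D then filter (\<lambda>y. y \<in> C) \<tau> @ [x] else [x]) \<tau>)"

end

theory Submission
  imports Defs
begin

text \<open>Since the vertices of \<open>S z\<close> all sit at one point \<open>z\<^sub>0\<close>, a nonempty block of them
  inserted into a shortcut tour after a prefix \<open>xs\<close> costs each of its \<open>k\<close> vertices the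
  arrival time \<open>\<ell>\<close> at \<open>z\<^sub>0\<close> and costs the vertices after it a detour \<open>D \<ge> 0\<close>.
  Condition on the active vertices outside the two parts, of sizes \<open>a\<close> and \<open>b\<close>, and let
  \<open>q = 1 - p\<close>. Placing both parts at the position of the first (second) part costs in
  expectation \<open>p (a + b) \<ell>\<^sub>1 + (1 - q ^ (a + b)) D\<^sub>1\<close> (resp. with \<open>\<ell>\<^sub>2, D\<^sub>2\<close>),
  whereas the original tour costs at least
  \<open>p a \<ell>\<^sub>1 + (1 - q ^ a) D\<^sub>1 + p b \<ell>\<^sub>2 + (1 - q ^ b) D\<^sub>2\<close>, because the earlier
  part only delays the arrival at the later one. As \<open>(1 - q ^ n) / n\<close> is
  non-increasing, the mixture of the two relocated tours with weights \<open>a\<close> and \<open>b\<close> is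
  no more expensive than the original tour, hence neither is the cheaper of them.\<close>

section \<open>Latency of shortcut tours\<close>

fun total_latency :: "('a \<Rightarrow> 'a \<Rightarrow> real) \<Rightarrow> 'a \<Rightarrow> 'a list \<Rightarrow> real" where
  "total_latency d c [] = 0"
| "total_latency d c (x # xs) = real (Suc (length xs)) * d c x + total_latency d x xs"

lemma sum_path_len_takeWhile_eq_total_latency:
  assumes "distinct s"
  shows "(\<Sum>w\<in>set s. path_len d (c # takeWhile (\<lambda>x. x \<noteq> w) s @ [w])) = total_latency d c s"
  using assms
proof (induction s arbitrary: c)
  case Nil
  then show ?case by simp
next
  case (Cons x xs)
  have x: "x \<notin> set xs" using Cons.prems by simp
  have "(\<Sum>w\<in>set (x # xs). path_len d (c # takeWhile (\<lambda>y. y \<noteq> w) (x # xs) @ [w]))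
      = d c x + (\<Sum>w\<in>set xs. d c x + path_len d (x # takeWhile (\<lambda>y. y \<noteq> w) xs @ [w]))"
    using x by (auto intro!: sum.cong)
  also have "\<dots> = real (length xs) * d c x + d c x + total_latency d x xs"
    using Cons by (simp add: sum.distrib distinct_card)
  finally show ?case by (simp add: algebra_simps)
qed

lemma LAT_eq_total_latency:
  assumes "distinct \<pi>" "A \<subseteq> set \<pi>"
  shows "LAT d r \<pi> A = total_latency d r (shortcut \<pi> A)"
proof -
  have "set (shortcut \<pi> A) = A" "distinct (shortcut \<pi> A)"
    using assms by (auto simp: shortcut_def)
  with sum_path_len_takeWhile_eq_total_latency[of "shortcut \<pi> A" d r] show ?thesis
    by (simp add: LAT_def lat_vertex_def)
qed

lemma shortcut_append: "shortcut (xs @ ys) A = shortcut xs A @ shortcut ys A"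
  by (simp add: shortcut_def)

lemma shortcut_Un_disjoint: "set xs \<inter> C = {} \<Longrightarrow> shortcut xs (B \<union> C) = shortcut xs B"
  by (auto simp: shortcut_def intro!: filter_cong)

lemma shortcut_Compl: "set u \<inter> D = {} \<Longrightarrow> shortcut u (- D) = u"
  by (auto simp: shortcut_def intro: filter_True)

lemma shortcut_infix:
  assumes "distinct (u @ Y @ v)"
  shows "shortcut (u @ Y @ v) (set Y) = Y"
proof -
  have "filter (\<lambda>x. x \<in> set Y) u = []" "filter (\<lambda>x. x \<in> set Y) v = []"
    using assms by (auto simp: filter_empty_conv)
  then show ?thesis by (simp add: shortcut_def)
qed

lemma length_shortcut: "distinct \<pi> \<Longrightarrow> C \<subseteq> set \<pi> \<Longrightarrow> length (shortcut \<pi> C) = card C"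
  by (simp add: shortcut_def distinct_length_filter Int_absorb2 Collect_mem_eq)

lemma shortcut_eq_Nil_iff: "C \<subseteq> set \<pi> \<Longrightarrow> shortcut \<pi> C = [] \<longleftrightarrow> C = {}"
  by (auto simp: shortcut_def filter_empty_conv)

lemma total_latency_append:
  "total_latency d c (xs @ ys)
     = total_latency d c xs + real (length ys) * path_len d (c # xs) + total_latency d (last (c # xs)) ys"
  by (induction xs arbitrary: c) (auto simp: algebra_simps)

lemma total_latency_cong_start:
  "(\<And>y. y \<in> set ys \<Longrightarrow> d c y = d c' y) \<Longrightarrow> total_latency d c ys = total_latency d c' ys"
  by (cases ys) auto

lemma total_latency_eq_0:
  "(\<And>u v. u \<in> set (c # xs) \<Longrightarrow> v \<in> set (c # xs) \<Longrightarrow> d u v = 0) \<Longrightarrow> total_latency d c xs = 0"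
  by (induction xs arbitrary: c) auto

lemma path_len_eq_0:
  "(\<And>u v. u \<in> set xs \<Longrightarrow> v \<in> set xs \<Longrightarrow> d u v = 0) \<Longrightarrow> path_len d xs = 0"
  by (induction d xs rule: path_len.induct) auto

lemma path_len_insert_ge:
  assumes tri: "\<And>x y w. d x w \<le> d x y + d y w" and nonneg: "\<And>x y. d x y \<ge> 0"
  shows "path_len d (xs @ ys) \<le> path_len d (xs @ z # ys)"
proof (induction xs)
  case Nil
  then show ?case using nonneg by (cases ys) auto
next
  case (Cons x xs)
  then show ?case
    using tri[of x _ z] nonneg[of x z] by (cases xs; cases ys) (auto simp: add.commute)
qed

lemma path_len_insert_list_ge:
  assumes "\<And>x y w. d x w \<le> d x y + d y w" "\<And>x y. d x y \<ge> 0"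
  shows "path_len d (xs @ ys) \<le> path_len d (xs @ zs @ ys)"
proof (induction zs arbitrary: xs)
  case Nil
  then show ?case by simp
next
  case (Cons z zs)
  have "path_len d (xs @ ys) \<le> path_len d (xs @ z # ys)"
    by (rule path_len_insert_ge[where d = d, OF assms])
  then show ?case
    using Cons.IH[where xs = "xs @ [z]"] by simp
qed

section \<open>Maximal runs and their relocation\<close>

definition maximal_run :: "'a list \<Rightarrow> 'a set \<Rightarrow> nat \<Rightarrow> nat \<Rightarrow> bool" where
  "maximal_run \<tau> S a b \<longleftrightarrow> a < b \<and> b \<le> length \<tau> \<and> (\<forall>k\<in>{a..<b}. \<tau> ! k \<in> S)
     \<and> (a = 0 \<or> \<tau> ! (a - 1) \<notin> S) \<and> (b = length \<tau> \<or> \<tau> ! b \<notin> S)"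

lemma is_part_iff_maximal_run:
  "is_part \<tau> S C \<longleftrightarrow> (\<exists>a b. maximal_run \<tau> S a b \<and> C = set (take (b - a) (drop a \<tau>)))"
  unfolding is_part_def maximal_run_def by blast

lemma maximal_run_subset: "maximal_run \<tau> S a b \<Longrightarrow> set (take (b - a) (drop a \<tau>)) \<subseteq> S"
  unfolding maximal_run_def by (auto simp: in_set_conv_nth)

lemma maximal_runs_disjoint:
  assumes "maximal_run \<tau> S a b" "maximal_run \<tau> S a' b'" "a < a'"
  shows "b \<le> a'"
proof (rule ccontr)
  assume "\<not> b \<le> a'"
  then have "a' - 1 \<in> {a..<b}" "a' \<noteq> 0" using assms(3) by auto
  then show False using assms(1,2) unfolding maximal_run_def by blast
qed

lemma maximal_run_unique:
  assumes "maximal_run \<tau> S a b" "maximal_run \<tau> S a b'"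
  shows "b = b'"
proof -
  have "\<not> c < c'" if "maximal_run \<tau> S a c" "maximal_run \<tau> S a c'" for c c'
  proof
    assume "c < c'"
    then have "c \<in> {a..<c'}" "c \<noteq> length \<tau>" using that unfolding maximal_run_def by auto
    then show False using that unfolding maximal_run_def by blast
  qed
  then show ?thesis using assms by (meson linorder_neqE_nat)
qed

lemma maximal_runs_split:
  assumes "maximal_run \<tau> S a b" "maximal_run \<tau> S a' b'" "a < a'"
  shows "\<tau> = take a \<tau> @ take (b - a) (drop a \<tau>) @ take (a' - b) (drop b \<tau>)
             @ take (b' - a') (drop a' \<tau>) @ drop b' \<tau>"
proof -
  have glue: "take (j - i) (drop i xs) @ drop j xs = drop i xs" if "i \<le> j" for i j and xs :: "'a list"
    using that by (metis append_take_drop_id drop_drop le_add_diff_inverse2)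
  have "a \<le> b" "b \<le> a'" "a' \<le> b'"
    using assms maximal_runs_disjoint[OF assms] unfolding maximal_run_def by simp_all
  then show ?thesis
    by (simp add: glue)
qed

lemma is_part_pair_split:
  assumes "is_part \<tau> S C\<^sub>1" "is_part \<tau> S C\<^sub>2" "C\<^sub>1 \<noteq> C\<^sub>2"
  obtains \<alpha> X \<beta> Y \<gamma> where "\<tau> = \<alpha> @ X @ \<beta> @ Y @ \<gamma>" "X \<noteq> []" "Y \<noteq> []"
    "set X \<subseteq> S" "set Y \<subseteq> S" "{C\<^sub>1, C\<^sub>2} = {set X, set Y}"
proof -
  note result = that
  obtain a b a' b' where runs: "maximal_run \<tau> S a b" "maximal_run \<tau> S a' b'"
    and C: "C\<^sub>1 = set (take (b - a) (drop a \<tau>))" "C\<^sub>2 = set (take (b' - a') (drop a' \<tau>))"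
    using assms(1,2) unfolding is_part_iff_maximal_run by blast
  have ordered: thesis
    if "maximal_run \<tau> S c e" "maximal_run \<tau> S c' e'" "c < c'"
      and "{C\<^sub>1, C\<^sub>2} = {set (take (e - c) (drop c \<tau>)), set (take (e' - c') (drop c' \<tau>))}"
    for c e c' e'
  proof (rule result[OF maximal_runs_split[OF that(1-3)]])
    show "take (e - c) (drop c \<tau>) \<noteq> []" "take (e' - c') (drop c' \<tau>) \<noteq> []"
      using that(1,2) unfolding maximal_run_def by auto
  qed (use that maximal_run_subset[OF that(1)] maximal_run_subset[OF that(2)] in auto)
  consider "a < a'" | "a' < a" | "a = a'" by arith
  then show thesis
  proof cases
    case 1
    then show thesis using ordered[OF runs] C by simp
  next
    case 2
    then show thesis using ordered[OF runs(2,1)] C by (simp add: insert_commute)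
  next
    case 3
    then show thesis using maximal_run_unique runs C assms(3) by blast
  qed
qed

lemma last_in_eqI:
  assumes "\<tau> = u @ x # v" "x \<in> C" "set v \<inter> C = {}"
  shows "last_in \<tau> C = x"
proof -
  have "Max {k. k < length \<tau> \<and> \<tau> ! k \<in> C} = length u"
  proof (rule Max_eqI)
    fix k assume k: "k \<in> {k. k < length \<tau> \<and> \<tau> ! k \<in> C}"
    show "k \<le> length u"
    proof (rule ccontr)
      assume "\<not> k \<le> length u"
      then have "\<tau> ! k \<in> set v"
        using k assms(1) by (auto simp: nth_append)
      then show False using k assms(3) by auto
    qed
  qed (use assms in auto)
  then show ?thesis using assms by (simp add: last_in_def)
qed

lemma first_in_eqI:
  assumes "\<tau> = u @ x # v" "x \<in> C" "set u \<inter> C = {}"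
  shows "first_in \<tau> C = x"
proof -
  have "Min {k. k < length \<tau> \<and> \<tau> ! k \<in> C} = length u"
  proof (rule Min_eqI)
    fix k assume k: "k \<in> {k. k < length \<tau> \<and> \<tau> ! k \<in> C}"
    show "length u \<le> k"
    proof (rule ccontr)
      assume "\<not> length u \<le> k"
      then have "\<tau> ! k \<in> set u"
        using assms(1) by (auto simp: nth_append)
      then show False using k assms(3) by auto
    qed
  qed (use assms in auto)
  then show ?thesis using assms by (simp add: first_in_def)
qed

lemma move_after_eq:
  assumes \<tau>: "\<tau> = u @ x # v" and "distinct \<tau>" "x \<in> C" "set v \<inter> C = {}" "x \<notin> D"
  shows "move_after \<tau> C D = shortcut u (- D) @ x # shortcut \<tau> D @ shortcut v (- D)"
proof -
  let ?f = "\<lambda>y. if y \<in> D then [] else if y = x then y # shortcut \<tau> D else [y]"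
  have "concat (map ?f ys) = shortcut ys (- D)" if "x \<notin> set ys" for ys
    using that by (induction ys) (auto simp: shortcut_def)
  moreover have "move_after \<tau> C D = concat (map ?f \<tau>)"
    unfolding move_after_def last_in_eqI[OF assms(1,3,4)] shortcut_def ..
  ultimately show ?thesis
    using assms by (simp add: \<tau>)
qed

lemma move_before_eq:
  assumes \<tau>: "\<tau> = u @ x # v" and "distinct \<tau>" "x \<in> D" "set u \<inter> D = {}" "x \<notin> C"
  shows "move_before \<tau> C D = shortcut u (- C) @ shortcut \<tau> C @ x # shortcut v (- C)"
proof -
  let ?f = "\<lambda>y. if y \<in> C then [] else if y = x then shortcut \<tau> C @ [y] else [y]"
  have "concat (map ?f ys) = shortcut ys (- C)" if "x \<notin> set ys" for ys
    using that by (induction ys) (auto simp: shortcut_def)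
  moreover have "move_before \<tau> C D = concat (map ?f \<tau>)"
    unfolding move_before_def first_in_eqI[OF assms(1,3,4)] shortcut_def ..
  ultimately show ?thesis
    using assms by (simp add: \<tau>)
qed

lemma move_after_run_eq:
  assumes \<tau>: "\<tau> = u @ X @ v" and "distinct \<tau>" "X \<noteq> []" "set X \<inter> D = {}"
  shows "move_after \<tau> (set X) D = shortcut u (- D) @ X @ shortcut \<tau> D @ shortcut v (- D)"
proof -
  have "\<tau> = (u @ butlast X) @ last X # v" using \<tau> \<open>X \<noteq> []\<close> by simp
  moreover have "set v \<inter> set X = {}" using \<tau> \<open>distinct \<tau>\<close> by auto
  moreover have "last X \<notin> D" using assms(4) last_in_set[OF \<open>X \<noteq> []\<close>] by blast
  ultimately have "move_after \<tau> (set X) D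
      = shortcut (u @ butlast X) (- D) @ last X # shortcut \<tau> D @ shortcut v (- D)"
    using \<open>distinct \<tau>\<close> \<open>X \<noteq> []\<close> by (intro move_after_eq) simp_all
  moreover have "shortcut (butlast X) (- D) = butlast X"
    using assms(4) by (auto intro!: shortcut_Compl dest: in_set_butlastD)
  ultimately show ?thesis
    using \<open>X \<noteq> []\<close> by (simp add: shortcut_append)
qed

lemma move_before_run_eq:
  assumes \<tau>: "\<tau> = u @ Y @ v" and "distinct \<tau>" "Y \<noteq> []" "set Y \<inter> C = {}"
  shows "move_before \<tau> C (set Y) = shortcut u (- C) @ shortcut \<tau> C @ Y @ shortcut v (- C)"
proof -
  have "\<tau> = u @ hd Y # (tl Y @ v)" using \<tau> \<open>Y \<noteq> []\<close> by simp
  moreover have "set u \<inter> set Y = {}" using \<tau> \<open>distinct \<tau>\<close> by auto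
  moreover have "hd Y \<notin> C" using assms(4) hd_in_set[OF \<open>Y \<noteq> []\<close>] by blast
  ultimately have "move_before \<tau> C (set Y)
      = shortcut u (- C) @ shortcut \<tau> C @ hd Y # shortcut (tl Y @ v) (- C)"
    using \<open>distinct \<tau>\<close> \<open>Y \<noteq> []\<close> by (intro move_before_eq) simp_all
  moreover have "shortcut (tl Y) (- C) = tl Y"
    using assms(3,4) by (intro shortcut_Compl) (metis disjoint_iff list.set_sel(2))
  ultimately show ?thesis
    using \<open>Y \<noteq> []\<close> by (simp add: shortcut_append)
qed

lemma move_runs:
  assumes \<tau>: "\<tau> = \<alpha> @ X @ \<beta> @ Y @ \<gamma>" and dist: "distinct \<tau>" and "X \<noteq> []" "Y \<noteq> []"
  shows "move_after \<tau> (set X) (set Y) = \<alpha> @ (X @ Y) @ \<beta> @ \<gamma>"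
    and "move_before \<tau> (set X) (set Y) = \<alpha> @ \<beta> @ (X @ Y) @ \<gamma>"
    and "move_after \<tau> (set Y) (set X) = \<alpha> @ \<beta> @ (Y @ X) @ \<gamma>"
    and "move_before \<tau> (set Y) (set X) = \<alpha> @ (Y @ X) @ \<beta> @ \<gamma>"
proof -
  have X: "shortcut \<tau> (set X) = X" and Y: "shortcut \<tau> (set Y) = Y"
    using shortcut_infix[of \<alpha> X "\<beta> @ Y @ \<gamma>"] shortcut_infix[of "\<alpha> @ X @ \<beta>" Y \<gamma>] dist \<tau> by simp_all
  have disj: "set \<alpha> \<inter> set X = {}" "set \<beta> \<inter> set X = {}" "set \<gamma> \<inter> set X = {}"
    "set \<alpha> \<inter> set Y = {}" "set \<beta> \<inter> set Y = {}" "set \<gamma> \<inter> set Y = {}" "set X \<inter> set Y = {}"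
    using dist \<tau> by auto
  have "shortcut xs (- set xs) = []" for xs :: "'a list"
    by (simp add: shortcut_def)
  then have "shortcut \<alpha> (- set Y) = \<alpha>" "shortcut (\<beta> @ Y @ \<gamma>) (- set Y) = \<beta> @ \<gamma>"
    "shortcut (\<alpha> @ X @ \<beta>) (- set X) = \<alpha> @ \<beta>" "shortcut \<gamma> (- set X) = \<gamma>"
    using disj by (simp_all add: shortcut_append shortcut_Compl)
  moreover note disj(7)
  ultimately show "move_after \<tau> (set X) (set Y) = \<alpha> @ (X @ Y) @ \<beta> @ \<gamma>"
    and "move_before \<tau> (set X) (set Y) = \<alpha> @ \<beta> @ (X @ Y) @ \<gamma>"
    and "move_after \<tau> (set Y) (set X) = \<alpha> @ \<beta> @ (Y @ X) @ \<gamma>"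
    and "move_before \<tau> (set Y) (set X) = \<alpha> @ (Y @ X) @ \<beta> @ \<gamma>"
    using move_after_run_eq[of \<tau> \<alpha> X "\<beta> @ Y @ \<gamma>" "set Y"]
      move_before_run_eq[of \<tau> "\<alpha> @ X @ \<beta>" Y \<gamma> "set X"]
      move_after_run_eq[of \<tau> "\<alpha> @ X @ \<beta>" Y \<gamma> "set X"]
      move_before_run_eq[of \<tau> \<alpha> X "\<beta> @ Y @ \<gamma>" "set Y"]
      X Y \<tau> dist \<open>X \<noteq> []\<close> \<open>Y \<noteq> []\<close>
    by (simp_all add: Int_commute)
qed

section \<open>Expectation over a random active set\<close>

definition subset_expectation :: "real \<Rightarrow> 'a set \<Rightarrow> ('a set \<Rightarrow> real) \<Rightarrow> real" where
  "subset_expectation p S f = (\<Sum>A\<in>Pow S. p ^ card A * (1 - p) ^ (card S - card A) * f A)"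

lemma exp_LAT_eq_subset_expectation: "exp_LAT d r \<pi> V p = subset_expectation p V (LAT d r \<pi>)"
  by (simp add: exp_LAT_def subset_expectation_def)

lemma sum_Pow_Un_disjoint:
  assumes "finite U" "finite W" "U \<inter> W = {}"
  shows "(\<Sum>A\<in>Pow (U \<union> W). f A) = (\<Sum>B\<in>Pow U. \<Sum>C\<in>Pow W. f (B \<union> C))"
proof -
  have inj: "inj_on (\<lambda>(B, C). B \<union> C) (Pow U \<times> Pow W)"
    using assms(3) by (auto simp: inj_on_def) blast+
  have "(\<lambda>(B, C). B \<union> C) ` (Pow U \<times> Pow W) = Pow (U \<union> W)"
  proof
    show "Pow (U \<union> W) \<subseteq> (\<lambda>(B, C). B \<union> C) ` (Pow U \<times> Pow W)"
    proof
      fix A assume "A \<in> Pow (U \<union> W)"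
      then have "A = (A \<inter> U) \<union> (A \<inter> W)" "(A \<inter> U, A \<inter> W) \<in> Pow U \<times> Pow W" by auto
      then show "A \<in> (\<lambda>(B, C). B \<union> C) ` (Pow U \<times> Pow W)" by (metis case_prod_conv image_eqI)
    qed
  qed auto
  then have "(\<Sum>A\<in>Pow (U \<union> W). f A) = (\<Sum>(B, C)\<in>Pow U \<times> Pow W. f (B \<union> C))"
    using sum.reindex[OF inj, of f] by (simp add: case_prod_beta')
  then show ?thesis
    by (simp add: sum.cartesian_product)
qed

lemma subset_expectation_Un_disjoint:
  assumes U: "finite U" and W: "finite W" and UW: "U \<inter> W = {}"
  shows "subset_expectation p (U \<union> W) f
           = subset_expectation p U (\<lambda>B. subset_expectation p W (\<lambda>C. f (B \<union> C)))"
proof -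
  have weight: "p ^ card (B \<union> C) * (1 - p) ^ (card (U \<union> W) - card (B \<union> C))
      = p ^ card B * (1 - p) ^ (card U - card B) * (p ^ card C * (1 - p) ^ (card W - card C))"
    if "B \<subseteq> U" "C \<subseteq> W" for B C
  proof -
    have "finite B" "finite C" "card B \<le> card U" "card C \<le> card W"
      using that U W by (auto intro: finite_subset card_mono)
    moreover have "card (U \<union> W) = card U + card W" "card (B \<union> C) = card B + card C"
      using that U W UW by (auto intro!: card_Un_disjoint intro: finite_subset)
    ultimately show ?thesis
      by (simp add: power_add algebra_simps flip: power_add)
  qed
  show ?thesis
    unfolding subset_expectation_def sum_Pow_Un_disjoint[OF assms]
    by (auto simp: weight sum_distrib_left mult.assoc intro!: sum.cong)
qed

lemma subset_expectation_cong:
  "(\<And>A. A \<subseteq> S \<Longrightarrow> f A = g A) \<Longrightarrow> subset_expectation p S f = subset_expectation p S g"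
  unfolding subset_expectation_def by (auto intro!: sum.cong)

lemma subset_expectation_add:
  "subset_expectation p S (\<lambda>A. f A + g A) = subset_expectation p S f + subset_expectation p S g"
  by (simp add: subset_expectation_def sum.distrib algebra_simps)

lemma subset_expectation_cmult:
  "subset_expectation p S (\<lambda>A. c * f A) = c * subset_expectation p S f"
  by (simp add: subset_expectation_def sum_distrib_left algebra_simps)

lemma subset_expectation_mono:
  assumes "0 \<le> p" "p \<le> 1" "\<And>A. A \<subseteq> S \<Longrightarrow> f A \<le> g A"
  shows "subset_expectation p S f \<le> subset_expectation p S g"
  unfolding subset_expectation_def using assms by (auto intro!: sum_mono mult_left_mono)

lemma subset_expectation_insert:
  assumes "finite S" "x \<notin> S"
  shows "subset_expectation p (insert x S) f
           = subset_expectation p S (\<lambda>B. (1 - p) * f B + p * f (insert x B))"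
proof -
  have "Pow {x} = {{}, {x}}" by blast
  then have "subset_expectation p {x} h = (1 - p) * h {} + p * h {x}" for h
    by (simp add: subset_expectation_def)
  then show ?thesis
    using subset_expectation_Un_disjoint[of S "{x}" p f] assms by simp
qed

lemma subset_expectation_const: "finite S \<Longrightarrow> subset_expectation p S (\<lambda>A. c) = c"
proof (induction S rule: finite_induct)
  case empty
  then show ?case by (simp add: subset_expectation_def)
next
  case (insert x F)
  then show ?case by (simp add: subset_expectation_insert algebra_simps)
qed

lemma subset_expectation_card:
  "finite S \<Longrightarrow> subset_expectation p S (\<lambda>A. real (card A)) = p * real (card S)"
proof (induction S rule: finite_induct)
  case empty
  then show ?case by (simp add: subset_expectation_def)
next
  case (insert x F)
  have "subset_expectation p (insert x F) (\<lambda>A. real (card A))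
      = subset_expectation p F (\<lambda>B. real (card B) + p)"
    unfolding subset_expectation_insert[OF insert(1,2)]
  proof (rule subset_expectation_cong)
    fix B assume "B \<subseteq> F"
    then have "card (insert x B) = Suc (card B)"
      using insert(1,2) by (meson card_insert_disjoint finite_subset subsetD)
    then show "(1 - p) * real (card B) + p * real (card (insert x B)) = real (card B) + p"
      by (simp add: algebra_simps)
  qed
  then show ?case
    using insert by (simp add: subset_expectation_add subset_expectation_const algebra_simps)
qed

lemma subset_expectation_empty_indicator:
  "finite S \<Longrightarrow> subset_expectation p S (\<lambda>A. if A = {} then 1 else 0) = (1 - p) ^ card S"
  by (simp add: subset_expectation_def if_distrib sum.delta' cong: if_cong)

lemma subset_expectation_card_nonempty:
  assumes "finite S"
  shows "subset_expectation p S (\<lambda>A. c + real (card A) * l + (if A = {} then 0 else D))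
           = c + p * real (card S) * l + (1 - (1 - p) ^ card S) * D"
proof -
  have "subset_expectation p S (\<lambda>A. c + real (card A) * l + (if A = {} then 0 else D))
      = subset_expectation p S (\<lambda>A. (c + D) + l * real (card A) + (- D) * (if A = {} then 1 else 0))"
    by (rule subset_expectation_cong) simp
  also have "\<dots> = c + D + l * (p * real (card S)) - D * (1 - p) ^ card S"
    using assms by (simp only: subset_expectation_add subset_expectation_cmult subset_expectation_const
        subset_expectation_card subset_expectation_empty_indicator)
  finally show ?thesis by (simp add: algebra_simps)
qed

lemma exp_LAT_conditioned:
  assumes "distinct \<pi>" "set \<pi> = U \<union> W" "U \<inter> W = {}"
  shows "exp_LAT d r \<pi> (U \<union> W) p = subset_expectation p U
           (\<lambda>B. subset_expectation p W (\<lambda>C. total_latency d r (shortcut \<pi> (B \<union> C))))"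
proof -
  have "finite U" "finite W" using finite_Un assms(2) by (metis List.finite_set)+
  moreover have "exp_LAT d r \<pi> (U \<union> W) p
      = subset_expectation p (U \<union> W) (\<lambda>A. total_latency d r (shortcut \<pi> A))"
    unfolding exp_LAT_eq_subset_expectation
    using assms by (intro subset_expectation_cong) (simp add: LAT_eq_total_latency)
  ultimately show ?thesis
    using assms(3) by (simp add: subset_expectation_Un_disjoint)
qed

text \<open>\<open>(1 - q ^ n) / n\<close> is non-increasing in \<open>n\<close>: compare the averages of the
  geometric sums \<open>(1 - q ^ n) / (1 - q) = (\<Sum>i<n. q ^ i)\<close>, whose terms decrease.\<close>

lemma one_minus_power_mult_le:
  fixes q :: real and a b :: nat
  assumes "0 \<le> q" "q \<le> 1"
  shows "real a * (1 - q ^ (a + b)) \<le> real (a + b) * (1 - q ^ a)"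
proof -
  have split: "(\<Sum>i<a + b. q ^ i) = (\<Sum>i<a. q ^ i) + (\<Sum>i\<in>{a..<a + b}. q ^ i)"
    by (metis add.commute le_add2 sum.atLeastLessThan_concat atLeast0LessThan le0)
  have "real (card {..<a}) * q ^ a \<le> (\<Sum>i<a. q ^ i)"
    by (rule sum_bounded_below) (use assms in \<open>auto intro: power_decreasing\<close>)
  then have head: "real a * q ^ a \<le> (\<Sum>i<a. q ^ i)" by simp
  have "(\<Sum>i\<in>{a..<a + b}. q ^ i) \<le> real (card {a..<a + b}) * q ^ a"
    by (rule sum_bounded_above) (use assms in \<open>auto intro: power_decreasing\<close>)
  then have tail: "(\<Sum>i\<in>{a..<a + b}. q ^ i) \<le> real b * q ^ a" by simp
  have "real a * (\<Sum>i\<in>{a..<a + b}. q ^ i) \<le> real b * (real a * q ^ a)"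
    using mult_left_mono[OF tail, of "real a"] by (simp add: algebra_simps)
  also have "\<dots> \<le> real b * (\<Sum>i<a. q ^ i)"
    using head by (rule mult_left_mono) simp
  finally have "real a * (\<Sum>i<a + b. q ^ i) \<le> real (a + b) * (\<Sum>i<a. q ^ i)"
    unfolding split by (simp add: algebra_simps)
  then have "(1 - q) * (real a * (\<Sum>i<a + b. q ^ i)) \<le> (1 - q) * (real (a + b) * (\<Sum>i<a. q ^ i))"
    using assms by (intro mult_left_mono) auto
  then show ?thesis
    by (simp add: one_diff_power_eq algebra_simps)
qed

lemma weighted_block_costs_le:
  fixes a b :: nat and p q c l\<^sub>1 l\<^sub>2 D\<^sub>1 D\<^sub>2 E :: real
  assumes "0 \<le> q" "q \<le> 1" "0 \<le> D\<^sub>1" "0 \<le> D\<^sub>2"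
    and "c + p * real a * l\<^sub>1 + (1 - q ^ a) * D\<^sub>1 + (p * real b * l\<^sub>2 + (1 - q ^ b) * D\<^sub>2) \<le> E"
  shows "real a * (c + p * real (a + b) * l\<^sub>1 + (1 - q ^ (a + b)) * D\<^sub>1)
           + real b * (c + p * real (a + b) * l\<^sub>2 + (1 - q ^ (a + b)) * D\<^sub>2)
         \<le> real (a + b) * E"
proof -
  have "D\<^sub>1 * (real a * (1 - q ^ (a + b))) \<le> D\<^sub>1 * (real (a + b) * (1 - q ^ a))"
    using one_minus_power_mult_le[OF assms(1,2), of a b] assms(3) by (rule mult_left_mono)
  moreover have "D\<^sub>2 * (real b * (1 - q ^ (a + b))) \<le> D\<^sub>2 * (real (a + b) * (1 - q ^ b))"
    using one_minus_power_mult_le[OF assms(1,2), of b a] assms(4) by (simp add: add.commute mult_left_mono)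
  ultimately have "real a * (c + p * real (a + b) * l\<^sub>1 + (1 - q ^ (a + b)) * D\<^sub>1)
      + real b * (c + p * real (a + b) * l\<^sub>2 + (1 - q ^ (a + b)) * D\<^sub>2)
      \<le> real (a + b) * (c + p * real a * l\<^sub>1 + (1 - q ^ a) * D\<^sub>1 + (p * real b * l\<^sub>2 + (1 - q ^ b) * D\<^sub>2))"
    by (simp add: algebra_simps)
  also have "\<dots> \<le> real (a + b) * E"
    using assms(5) by (rule mult_left_mono) simp
  finally show ?thesis .
qed

lemma min_le_of_weighted_le:
  fixes a b x y z :: real
  assumes "0 < a" "0 < b" "a * x + b * y \<le> (a + b) * z"
  shows "min x y \<le> z"
proof (rule ccontr)
  assume "\<not> min x y \<le> z"
  then have "a * z < a * x" "b * z < b * y" using assms(1,2) by simp_all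
  then show False using assms(3) by (simp add: algebra_simps)
qed

section \<open>Inserting a block of co-located vertices\<close>

locale colocated_block =
  fixes d :: "'a \<Rightarrow> 'a \<Rightarrow> real" and r z0 :: 'a and K Z :: "'a set"
  assumes sym: "\<And>x y. d x y = d y x"
    and tri: "\<And>x y w. d x w \<le> d x y + d y w"
    and nonneg: "\<And>x y. d x y \<ge> 0"
    and root_in: "r \<in> K"
    and block_in: "Z \<subseteq> K"
    and block_dist: "\<And>u x. u \<in> Z \<Longrightarrow> x \<in> K \<Longrightarrow> d u x = d z0 x"
    and block_zero: "\<And>u w. u \<in> Z \<Longrightarrow> w \<in> Z \<Longrightarrow> d u w = 0"
begin

text \<open>A nonempty block of vertices of \<open>Z\<close> inserted after the prefix \<open>xs\<close> of a tour
  from \<open>r\<close> is reached at time \<open>arrival xs\<close>, and it delays the suffix \<open>ys\<close> in total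
  by \<open>detour xs ys\<close>.\<close>

definition arrival :: "'a list \<Rightarrow> real" where
  "arrival xs = path_len d (r # xs) + d (last (r # xs)) z0"

definition detour :: "'a list \<Rightarrow> 'a list \<Rightarrow> real" where
  "detour xs ys = real (length ys) * d (last (r # xs)) z0
     + total_latency d z0 ys - total_latency d (last (r # xs)) ys"

lemma detour_nonneg: "detour xs ys \<ge> 0"
proof (cases ys)
  case Nil
  then show ?thesis by (simp add: detour_def)
next
  case (Cons y ys')
  define e where "e = last (r # xs)"
  have "d e y \<le> d e z0 + d z0 y" by (rule tri)
  then have "0 \<le> real (Suc (length ys')) * (d e z0 + d z0 y - d e y)" by simp
  then show ?thesis
    unfolding detour_def e_def[symmetric] using Cons by (simp add: algebra_simps)
qed

lemma total_latency_from_block: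
  assumes "zs \<noteq> []" "set zs \<subseteq> Z" "c \<in> K" "set ys \<subseteq> K"
  shows "total_latency d c (zs @ ys) = real (length zs + length ys) * d c z0 + total_latency d z0 ys"
proof -
  obtain u zs' where zs: "zs = u # zs'" using assms(1) by (cases zs) auto
  have last_Z: "last (u # zs') \<in> Z"
    using assms(2) zs by (metis last_in_set list.distinct(1) subsetD)
  have "d c u = d c z0"
    using block_dist[of u c] assms(2,3) zs sym by simp
  moreover have "total_latency d u zs' = 0" "path_len d (u # zs') = 0"
    using assms(2) zs by (auto intro!: total_latency_eq_0 path_len_eq_0 block_zero)
  moreover have "total_latency d (last (u # zs')) ys = total_latency d z0 ys"
    using block_dist[OF last_Z] assms(4) by (auto intro!: total_latency_cong_start)
  ultimately show ?thesis
    using zs by (simp add: total_latency_append algebra_simps)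
qed

lemma total_latency_insert_block:
  assumes "set zs \<subseteq> Z" "set xs \<subseteq> K" "set ys \<subseteq> K"
  shows "total_latency d r (xs @ zs @ ys)
           = total_latency d r (xs @ ys) + real (length zs) * arrival xs
             + (if zs = [] then 0 else detour xs ys)"
proof (cases "zs = []")
  case False
  have "last (r # xs) \<in> K"
    using assms(2) root_in by (metis last_in_set list.distinct(1) set_ConsD subsetD)
  then have "total_latency d (last (r # xs)) (zs @ ys)
      = real (length zs + length ys) * d (last (r # xs)) z0 + total_latency d z0 ys"
    using False assms by (intro total_latency_from_block) auto
  then show ?thesis
    using False by (simp add: total_latency_append arrival_def detour_def algebra_simps)
qed simp

lemma total_latency_second_block_ge:
  assumes "set xs \<subseteq> K" "set mid \<subseteq> K" "set ys \<subseteq> K" "set zs \<subseteq> Z" "set zs' \<subseteq> Z"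
    and "mid \<noteq> []"
  shows "total_latency d r (xs @ zs @ mid @ ys) + real (length zs') * arrival (xs @ mid)
           + (if zs' = [] then 0 else detour (xs @ mid) ys)
         \<le> total_latency d r (xs @ zs @ mid @ zs' @ ys)"
proof -
  have same_last: "last (r # xs @ zs @ mid) = last (r # xs @ mid)"
    using \<open>mid \<noteq> []\<close> by simp
  have "path_len d ((r # xs) @ mid) \<le> path_len d ((r # xs) @ zs @ mid)"
    by (rule path_len_insert_list_ge[OF tri nonneg])
  then have "arrival (xs @ mid) \<le> arrival (xs @ zs @ mid)"
    unfolding arrival_def same_last by simp
  then have "real (length zs') * arrival (xs @ mid) \<le> real (length zs') * arrival (xs @ zs @ mid)"
    by (rule mult_left_mono) simp
  moreover have "detour (xs @ zs @ mid) ys = detour (xs @ mid) ys"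
    unfolding detour_def same_last ..
  moreover have "total_latency d r ((xs @ zs @ mid) @ zs' @ ys)
      = total_latency d r (xs @ zs @ mid @ ys) + real (length zs') * arrival (xs @ zs @ mid)
        + (if zs' = [] then 0 else detour (xs @ zs @ mid) ys)"
    using assms block_in by (subst total_latency_insert_block) auto
  ultimately show ?thesis by simp
qed

lemma expectation_insert_block:
  assumes "set xs \<subseteq> K" "set ys \<subseteq> K" "distinct zs" "set zs \<subseteq> Z"
  shows "subset_expectation p (set zs) (\<lambda>C. total_latency d r (xs @ shortcut zs C @ ys))
           = total_latency d r (xs @ ys) + p * real (length zs) * arrival xs
             + (1 - (1 - p) ^ length zs) * detour xs ys"
proof -
  have "subset_expectation p (set zs) (\<lambda>C. total_latency d r (xs @ shortcut zs C @ ys))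
      = subset_expectation p (set zs) (\<lambda>C. total_latency d r (xs @ ys) + real (card C) * arrival xs
          + (if C = {} then 0 else detour xs ys))"
  proof (rule subset_expectation_cong)
    fix C assume "C \<subseteq> set zs"
    moreover have "set (shortcut zs C) \<subseteq> Z" using assms(4) by (auto simp: shortcut_def)
    ultimately show "total_latency d r (xs @ shortcut zs C @ ys) = total_latency d r (xs @ ys)
        + real (card C) * arrival xs + (if C = {} then 0 else detour xs ys)"
      using assms by (simp add: total_latency_insert_block length_shortcut shortcut_eq_Nil_iff)
  qed
  then show ?thesis
    using assms(3) by (simp add: subset_expectation_card_nonempty distinct_card)
qed

lemma expectation_two_blocks_ge:
  assumes "set xs \<subseteq> K" "set mid \<subseteq> K" "set ys \<subseteq> K" "mid \<noteq> []"
    and XY: "distinct (X @ Y)" "set X \<subseteq> Z" "set Y \<subseteq> Z"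
    and p: "0 \<le> p" "p \<le> 1"
  shows "total_latency d r (xs @ mid @ ys)
           + p * real (length X) * arrival xs + (1 - (1 - p) ^ length X) * detour xs (mid @ ys)
           + (p * real (length Y) * arrival (xs @ mid) + (1 - (1 - p) ^ length Y) * detour (xs @ mid) ys)
         \<le> subset_expectation p (set X \<union> set Y)
              (\<lambda>C. total_latency d r (xs @ shortcut X C @ mid @ shortcut Y C @ ys))"
    (is "?lhs \<le> _")
proof -
  let ?second = "\<lambda>C. real (card C) * arrival (xs @ mid) + (if C = {} then 0 else detour (xs @ mid) ys)"
  let ?first = "\<lambda>C. total_latency d r (xs @ shortcut X C @ mid @ ys)"
  have disj: "set X \<inter> set Y = {}" using XY by simp
  have "?lhs = subset_expectation p (set X) (\<lambda>C1. ?first C1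
      + (p * real (length Y) * arrival (xs @ mid) + (1 - (1 - p) ^ length Y) * detour (xs @ mid) ys))"
    using assms by (simp add: subset_expectation_add subset_expectation_const expectation_insert_block)
  also have "\<dots> = subset_expectation p (set X) (\<lambda>C1. subset_expectation p (set Y) (\<lambda>C2. ?first C1 + ?second C2))"
  proof (rule subset_expectation_cong)
    fix C1
    show "?first C1 + (p * real (length Y) * arrival (xs @ mid)
          + (1 - (1 - p) ^ length Y) * detour (xs @ mid) ys)
        = subset_expectation p (set Y) (\<lambda>C2. ?first C1 + ?second C2)"
      using subset_expectation_card_nonempty[of "set Y" p "?first C1"] XY
      by (simp add: distinct_card add.assoc)
  qed
  also have "\<dots> \<le> subset_expectation p (set X) (\<lambda>C1. subset_expectation p (set Y)
      (\<lambda>C2. total_latency d r (xs @ shortcut X (C1 \<union> C2) @ mid @ shortcut Y (C1 \<union> C2) @ ys)))"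
  proof (intro subset_expectation_mono[OF p])
    fix C1 C2 assume C: "C1 \<subseteq> set X" "C2 \<subseteq> set Y"
    then have "shortcut X (C1 \<union> C2) = shortcut X C1" "shortcut Y (C1 \<union> C2) = shortcut Y C2"
      using disj by (auto simp: shortcut_def intro!: filter_cong)
    moreover have "set (shortcut X C1) \<subseteq> Z" "set (shortcut Y C2) \<subseteq> Z"
      using XY by (auto simp: shortcut_def)
    ultimately show "?first C1 + ?second C2
        \<le> total_latency d r (xs @ shortcut X (C1 \<union> C2) @ mid @ shortcut Y (C1 \<union> C2) @ ys)"
      using total_latency_second_block_ge[of xs mid ys "shortcut X C1" "shortcut Y C2"] assms C XY
      by (simp add: length_shortcut shortcut_eq_Nil_iff)
  qed
  also have "\<dots> = subset_expectation p (set X \<union> set Y)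
      (\<lambda>C. total_latency d r (xs @ shortcut X C @ mid @ shortcut Y C @ ys))"
    by (rule subset_expectation_Un_disjoint[symmetric]) (use disj in auto)
  finally show ?thesis .
qed

lemma weighted_relocations_le:
  assumes K: "set xs \<subseteq> K" "set mid \<subseteq> K" "set ys \<subseteq> K"
    and XY: "distinct (X @ Y)" "set X \<subseteq> Z" "set Y \<subseteq> Z"
    and M: "distinct M" "set M = set X \<union> set Y"
    and p: "0 \<le> p" "p \<le> 1"
  shows "real (length X) * subset_expectation p (set M)
             (\<lambda>C. total_latency d r (xs @ shortcut M C @ mid @ ys))
         + real (length Y) * subset_expectation p (set M)
             (\<lambda>C. total_latency d r (xs @ mid @ shortcut M C @ ys))
         \<le> real (length X + length Y) * subset_expectation p (set M)
             (\<lambda>C. total_latency d r (xs @ shortcut X C @ mid @ shortcut Y C @ ys))"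
proof -
  define q where "q = 1 - p"
  have q: "0 \<le> q" "q \<le> 1" using p by (simp_all add: q_def)
  have len_M: "length M = length X + length Y"
    using M XY by (metis distinct_card length_append set_append)
  have MZ: "set M \<subseteq> Z" using M XY by simp
  have E1: "subset_expectation p (set M) (\<lambda>C. total_latency d r (xs @ shortcut M C @ mid @ ys))
      = total_latency d r (xs @ mid @ ys) + p * real (length X + length Y) * arrival xs
        + (1 - q ^ (length X + length Y)) * detour xs (mid @ ys)"
    using expectation_insert_block[of xs "mid @ ys" M p] K M MZ len_M by (simp add: q_def)
  have E2: "subset_expectation p (set M) (\<lambda>C. total_latency d r (xs @ mid @ shortcut M C @ ys))
      = total_latency d r (xs @ mid @ ys) + p * real (length X + length Y) * arrival (xs @ mid)
        + (1 - q ^ (length X + length Y)) * detour (xs @ mid) ys"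
    using expectation_insert_block[of "xs @ mid" ys M p] K M MZ len_M by (simp add: q_def)
  show ?thesis
  proof (cases "mid = []")
    case True
    have "subset_expectation p (set M)
        (\<lambda>C. total_latency d r (xs @ shortcut X C @ mid @ shortcut Y C @ ys))
        = subset_expectation p (set (X @ Y)) (\<lambda>C. total_latency d r (xs @ shortcut (X @ Y) C @ ys))"
      using True M by (simp add: shortcut_def)
    also have "\<dots> = subset_expectation p (set M) (\<lambda>C. total_latency d r (xs @ shortcut M C @ mid @ ys))"
      unfolding E1 using expectation_insert_block[of xs ys "X @ Y" p] K XY True by (simp add: q_def)
    finally show ?thesis
      using True by (simp add: algebra_simps)
  next
    case False
    show ?thesis
      unfolding E1 E2
      by (rule weighted_block_costs_le[OF q detour_nonneg detour_nonneg])
        (use expectation_two_blocks_ge[OF K False XY p] M in \<open>simp add: q_def\<close>)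
  qed
qed

lemma exp_LAT_relocation_min_le:
  assumes tau: "\<tau> = \<alpha> @ X @ \<beta> @ Y @ \<gamma>" and dist: "distinct \<tau>" and "X \<noteq> []" "Y \<noteq> []"
    and XY: "set X \<subseteq> Z" "set Y \<subseteq> Z" and K: "set \<tau> \<subseteq> K"
    and M: "distinct M" "set M = set X \<union> set Y"
    and p: "0 \<le> p" "p \<le> 1"
  shows "min (exp_LAT d r (\<alpha> @ M @ \<beta> @ \<gamma>) (set \<tau>) p) (exp_LAT d r (\<alpha> @ \<beta> @ M @ \<gamma>) (set \<tau>) p)
           \<le> exp_LAT d r \<tau> (set \<tau>) p"
proof -
  define U where "U = set \<alpha> \<union> set \<beta> \<union> set \<gamma>"
  define a where "a = real (length X)"
  define b where "b = real (length Y)"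
  have UM: "set \<tau> = U \<union> set M" "U \<inter> set M = {}"
    using tau dist M by (auto simp: U_def)
  have pointwise: "a * subset_expectation p (set M)
          (\<lambda>C. total_latency d r (shortcut (\<alpha> @ M @ \<beta> @ \<gamma>) (B \<union> C)))
      + b * subset_expectation p (set M)
          (\<lambda>C. total_latency d r (shortcut (\<alpha> @ \<beta> @ M @ \<gamma>) (B \<union> C)))
      \<le> (a + b) * subset_expectation p (set M) (\<lambda>C. total_latency d r (shortcut \<tau> (B \<union> C)))"
    if B: "B \<subseteq> U" for B
  proof -
    have outer: "shortcut xs (B \<union> C) = shortcut xs B" if "set xs \<subseteq> U" "C \<subseteq> set M" for xs C
      using that UM by (intro shortcut_Un_disjoint) blast
    have inner: "shortcut xs (B \<union> C) = shortcut xs C" if "set xs \<subseteq> set M" for xs C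
      using that B UM shortcut_Un_disjoint[of xs B C] by (metis Un_commute disjoint_iff subsetD)
    have "set (shortcut xs B) \<subseteq> K" if "set xs \<subseteq> set \<tau>" for xs
      using that K by (auto simp: shortcut_def)
    then have "set (shortcut \<alpha> B) \<subseteq> K" "set (shortcut \<beta> B) \<subseteq> K" "set (shortcut \<gamma> B) \<subseteq> K"
      using tau by auto
    moreover have "distinct (X @ Y)" "set \<alpha> \<subseteq> U" "set \<beta> \<subseteq> U" "set \<gamma> \<subseteq> U"
      using dist tau by (auto simp: U_def)
    ultimately show ?thesis
      using weighted_relocations_le[of "shortcut \<alpha> B" "shortcut \<beta> B" "shortcut \<gamma> B" X Y M p] XY M p tau
      by (simp add: a_def b_def shortcut_append outer inner cong: subset_expectation_cong)
  qed
  have relocated: "distinct (\<alpha> @ M @ \<beta> @ \<gamma>)" "set (\<alpha> @ M @ \<beta> @ \<gamma>) = U \<union> set M"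
    "distinct (\<alpha> @ \<beta> @ M @ \<gamma>)" "set (\<alpha> @ \<beta> @ M @ \<gamma>) = U \<union> set M"
    using dist tau M UM by auto
  have "a * exp_LAT d r (\<alpha> @ M @ \<beta> @ \<gamma>) (set \<tau>) p + b * exp_LAT d r (\<alpha> @ \<beta> @ M @ \<gamma>) (set \<tau>) p
      \<le> (a + b) * exp_LAT d r \<tau> (set \<tau>) p"
    unfolding UM(1) exp_LAT_conditioned[OF relocated(1,2) UM(2)]
      exp_LAT_conditioned[OF relocated(3,4) UM(2)] exp_LAT_conditioned[OF dist UM]
    using pointwise
    by (simp add: subset_expectation_mono[OF p] flip: subset_expectation_cmult subset_expectation_add)
  moreover have "0 < a" "0 < b"
    using \<open>X \<noteq> []\<close> \<open>Y \<noteq> []\<close> by (simp_all add: a_def b_def)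
  ultimately show ?thesis
    by (intro min_le_of_weighted_le)
qed

end

theorem lemma6:
  fixes d :: "'a \<Rightarrow> 'a \<Rightarrow> real" and r :: 'a
    and X :: "'b set" and S :: "'b \<Rightarrow> 'a set"
    and \<tau> :: "'a list" and p :: real and z :: 'b and Ci Cj :: "'a set"
  assumes metric: "\<And>x. d x x = 0" "\<And>x y. d x y \<ge> 0" "\<And>x y. d x y = d y x"
      "\<And>x y w. d x w \<le> d x y + d y w"
    and finX: "finite X" and finS: "\<And>v. v \<in> X \<Longrightarrow> finite (S v)"
    and disj: "\<And>v w. v \<in> X \<Longrightarrow> w \<in> X \<Longrightarrow> v \<noteq> w \<Longrightarrow> S v \<inter> S w = {}"
    and root: "r \<notin> (\<Union>v\<in>X. S v)"
    and coloc: "\<And>v u w x. v \<in> X \<Longrightarrow> u \<in> S v \<Longrightarrow> w \<in> S v \<Longrightarrow>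
                  x \<in> insert r (\<Union>v\<in>X. S v) \<Longrightarrow> d u w = 0 \<and> d u x = d w x"
    and p: "0 \<le> p" "p \<le> 1"
    and master: "distinct \<tau>" "set \<tau> = (\<Union>v\<in>X. S v)"
    and z: "z \<in> X"
    and Ci: "is_part \<tau> (S z) Ci" and Cj: "is_part \<tau> (S z) Cj" and ij: "Ci \<noteq> Cj"
  shows "exp_LAT d r \<tau> (\<Union>v\<in>X. S v) p \<ge>
           min (exp_LAT d r (move_after \<tau> Ci Cj) (\<Union>v\<in>X. S v) p)
               (exp_LAT d r (move_before \<tau> Ci Cj) (\<Union>v\<in>X. S v) p)"
proof -
  obtain \<alpha> P \<beta> Q \<gamma> where \<tau>: "\<tau> = \<alpha> @ P @ \<beta> @ Q @ \<gamma>" and "P \<noteq> []" "Q \<noteq> []"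
    and PQ: "set P \<subseteq> S z" "set Q \<subseteq> S z" and parts: "{Ci, Cj} = {set P, set Q}"
    using is_part_pair_split[OF Ci Cj ij] .
  have "hd P \<in> S z" using PQ \<open>P \<noteq> []\<close> by auto
  interpret colocated_block d r "hd P" "insert r (set \<tau>)" "S z"
    by (unfold_locales; (rule metric)?)
      (use z master(2) coloc[OF z _ \<open>hd P \<in> S z\<close>] coloc[OF z, of _ _ r] in auto)
  have relocate: "min (exp_LAT d r (\<alpha> @ M @ \<beta> @ \<gamma>) (set \<tau>) p) (exp_LAT d r (\<alpha> @ \<beta> @ M @ \<gamma>) (set \<tau>) p)
      \<le> exp_LAT d r \<tau> (set \<tau>) p" if "distinct M" "set M = set P \<union> set Q" for M
    by (rule exp_LAT_relocation_min_le[OF \<tau> master(1) \<open>P \<noteq> []\<close> \<open>Q \<noteq> []\<close> PQ subset_insertI that p])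
  have "distinct (P @ Q)" "distinct (Q @ P)" using master(1) \<tau> by auto
  from parts consider "Ci = set P" "Cj = set Q" | "Ci = set Q" "Cj = set P"
    by (auto simp: doubleton_eq_iff)
  then show ?thesis
    using relocate[of "P @ Q"] relocate[of "Q @ P"] \<open>distinct (P @ Q)\<close> \<open>distinct (Q @ P)\<close>
      move_runs[OF \<tau> master(1) \<open>P \<noteq> []\<close> \<open>Q \<noteq> []\<close>] master(2)
    by cases (simp_all add: Un_commute min.commute)
qed

end
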